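(* Let $(\mathcal H,\mathfrak A_0)$ be a Hilbert quasi *-algebra with unit $e$. Then the set $\mathcal H_b$ of bounded elements coincides with the set of universal multipliers of $\mathcal H$, i.e. $\mathcal H_b=\{\xi\in\mathcal H:\ \eta\square\xi \text{ is defined for every }\eta\in\mathcal H\}=\{\xi\in\mathcal H:\ \xi\square\eta\text{ is defined for every }\eta\in\mathcal H\}$.
   Context: A Hilbert algebra is a *-algebra $\mathfrak A_0$ with an inner product $\langle\cdot,\cdot\rangle$ such that (i) for each $x$, $y\mapsto xy$ is continuous for the inner product norm; (ii) $\langle xy,z\rangle=\langle y,x^*z\rangle$ for all $x,y,z$; (iii) $\langle x,y\rangle=\langle y^*,x^*\rangle$ for all $x,y$; (iv) the linear span of $\{xy:x,y\in\mathfrak A_0\}$ is dense in $\mathfrak A_0$. Let $\mathcal H$ be the Hilbert space completion of $\mathfrak A_0$; the involution extends isometrically to $\mathcal H$, and the products $\xi x$, $x\xi$ for $\xi\in\mathcal H$, $x\in\mathfrak A_0$ are defined by continuity. It is assumed that (A): if $\xi\in\mathcal H$ and $\xi x=0$ for all $x\in\mathfrak A_0$ then $\xi=0$. With these operations $(\mathcal H,\mathfrak A_0)$ is a Banach quasi *-algebra, called a Hilbert quasi *-algebra. A unit is $e\in\mathfrak A_0$ with $\xi e=e\xi=\xi$ for all $\xi\in\mathcal H$. For $\xi\in\mathcal H$, $L_\xi$, $R_\xi$ are the operators with domain $\mathfrak A_0$ given by $L_\xi x=\xi x$, $R_\xi x=x\xi$. $\xi$ is a bounded element if $L_\xi$ is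 bounded on $\mathfrak A_0$ (equivalently, $R_\xi$ is bounded). $\mathcal H_b$ is the set of bounded elements. Weak multiplication: $\xi$ is a left multiplier of $\eta$ if there is $\zeta\in\mathcal H$ with $\langle\eta x,\xi^*y\rangle=\langle\zeta x,y\rangle$ for all $x,y\in\mathfrak A_0$; then $\xi\square\eta:=\zeta$. *)

theory Defs
  imports "HOL-Analysis.Analysis"
begin

text \<open>
  The Hilbert space H is modelled by a type 'h of class banach (complete normed space
  over the reals), equipped with a complex scalar multiplication compatible with the
  real one, and a complex inner product (linear in the first, conjugate-linear in the
  second argument) inducing the norm. The whole type is H.
  The multiplication mult is a total function, but only the values mult xi x and mult x xi
  with x in A0 are constrained (and meaningful).
\<close>

record 'h hqa_data =
  scC   :: "complex \<Rightarrow> 'h \<Rightarrow> 'h"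
  ip    :: "'h \<Rightarrow> 'h \<Rightarrow> complex"
  inv   :: "'h \<Rightarrow> 'h"
  mult  :: "'h \<Rightarrow> 'h \<Rightarrow> 'h"
  alg0  :: "'h set"

definition complex_hilbert_space :: "('h::banach) hqa_data \<Rightarrow> bool" where
  "complex_hilbert_space S \<longleftrightarrow>
     (\<forall>a b x. scC S (a + b) x = scC S a x + scC S b x) \<and>
     (\<forall>a x y. scC S a (x + y) = scC S a x + scC S a y) \<and>
     (\<forall>a b x. scC S (a * b) x = scC S a (scC S b x)) \<and>
     (\<forall>x. scC S 1 x = x) \<and>
     (\<forall>r x. scC S (complex_of_real r) x = scaleR r x) \<and>
     (\<forall>x y z. ip S (x + y) z = ip S x z + ip S y z) \<and>
     (\<forall>a x y. ip S (scC S a x) y = a * ip S x y) \<and>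
     (\<forall>x y. ip S y x = cnj (ip S x y)) \<and>
     (\<forall>x. 0 \<le> Re (ip S x x)) \<and>
     (\<forall>x. norm x = sqrt (Re (ip S x x)))"

text \<open>Hilbert quasi *-algebra (H, A0) obtained from a Hilbert algebra A0 with completion H,
  satisfying condition (A).\<close>

definition hilbert_quasi_star_algebra :: "('h::banach) hqa_data \<Rightarrow> bool" where
  "hilbert_quasi_star_algebra S \<longleftrightarrow>
     complex_hilbert_space S \<and>
     \<comment> \<open>A0 is a complex *-algebra\<close>
     0 \<in> alg0 S \<and>
     (\<forall>x\<in>alg0 S. \<forall>y\<in>alg0 S. x + y \<in> alg0 S) \<and>
     (\<forall>a. \<forall>x\<in>alg0 S. scC S a x \<in> alg0 S) \<and>
     (\<forall>x\<in>alg0 S. \<forall>y\<in>alg0 S. mult S x y \<in> alg0 S) \<and>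
     (\<forall>x\<in>alg0 S. \<forall>y\<in>alg0 S. \<forall>z\<in>alg0 S. mult S (mult S x y) z = mult S x (mult S y z)) \<and>
     (\<forall>x\<in>alg0 S. inv S x \<in> alg0 S) \<and>
     (\<forall>x\<in>alg0 S. \<forall>y\<in>alg0 S. inv S (mult S x y) = mult S (inv S y) (inv S x)) \<and>
     \<comment> \<open>A0 is dense in H (H is its completion)\<close>
     closure (alg0 S) = UNIV \<and>
     \<comment> \<open>the involution on H: isometric conjugate-linear involutive extension\<close>
     (\<forall>\<xi> \<eta>. inv S (\<xi> + \<eta>) = inv S \<xi> + inv S \<eta>) \<and>
     (\<forall>a \<xi>. inv S (scC S a \<xi>) = scC S (cnj a) (inv S \<xi>)) \<and>
     (\<forall>\<xi>. inv S (inv S \<xi>) = \<xi>) \<and>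
     (\<forall>\<xi>. norm (inv S \<xi>) = norm \<xi>) \<and>
     \<comment> \<open>products with an element of A0 on either side: bounded (bi)linear maps on H,
         i.e. the extensions by continuity of the products on A0\<close>
     (\<forall>x\<in>alg0 S. \<forall>\<xi> \<eta>. mult S (\<xi> + \<eta>) x = mult S \<xi> x + mult S \<eta> x) \<and>
     (\<forall>x\<in>alg0 S. \<forall>\<xi> \<eta>. mult S x (\<xi> + \<eta>) = mult S x \<xi> + mult S x \<eta>) \<and>
     (\<forall>x\<in>alg0 S. \<forall>a \<xi>. mult S (scC S a \<xi>) x = scC S a (mult S \<xi> x)) \<and>
     (\<forall>x\<in>alg0 S. \<forall>a \<xi>. mult S x (scC S a \<xi>) = scC S a (mult S x \<xi>)) \<and>
     (\<forall>x\<in>alg0 S. \<exists>C. \<forall>\<xi>. norm (mult S \<xi> x) \<le> C * norm \<xi>) \<and>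
     (\<forall>x\<in>alg0 S. \<exists>C. \<forall>\<xi>. norm (mult S x \<xi>) \<le> C * norm \<xi>) \<and>
     \<comment> \<open>Hilbert algebra axioms (i)-(iv)\<close>
     (\<forall>x\<in>alg0 S. \<exists>C. \<forall>y\<in>alg0 S. norm (mult S x y) \<le> C * norm y) \<and>
     (\<forall>x\<in>alg0 S. \<forall>y\<in>alg0 S. \<forall>z\<in>alg0 S.
        ip S (mult S x y) z = ip S y (mult S (inv S x) z)) \<and>
     (\<forall>x\<in>alg0 S. \<forall>y\<in>alg0 S. ip S x y = ip S (inv S y) (inv S x)) \<and>
     (\<forall>x\<in>alg0 S. \<forall>\<epsilon>>0. \<exists>(n::nat) c a b. (\<forall>i<n. a i \<in> alg0 S \<and> b i \<in> alg0 S) \<and>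
        norm (x - (\<Sum>i<n. scC S (c i) (mult S (a i) (b i)))) < \<epsilon>) \<and>
     \<comment> \<open>condition (A)\<close>
     (\<forall>\<xi>. (\<forall>x\<in>alg0 S. mult S \<xi> x = 0) \<longrightarrow> \<xi> = 0)"

definition hqa_unit :: "('h::banach) hqa_data \<Rightarrow> 'h \<Rightarrow> bool" where
  "hqa_unit S e \<longleftrightarrow> e \<in> alg0 S \<and> (\<forall>\<xi>. mult S \<xi> e = \<xi> \<and> mult S e \<xi> = \<xi>)"

definition bounded_elements :: "('h::banach) hqa_data \<Rightarrow> 'h set" where
  "bounded_elements S = {\<xi>. \<exists>C. \<forall>x\<in>alg0 S. norm (mult S \<xi> x) \<le> C * norm x}"

text \<open>xi is a left multiplier of eta, i.e. xi \<box> eta is defined.\<close>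
definition left_multiplier :: "('h::banach) hqa_data \<Rightarrow> 'h \<Rightarrow> 'h \<Rightarrow> bool" where
  "left_multiplier S \<xi> \<eta> \<longleftrightarrow>
     (\<exists>\<zeta>. \<forall>x\<in>alg0 S. \<forall>y\<in>alg0 S.
        ip S (mult S \<eta> x) (mult S (inv S \<xi>) y) = ip S (mult S \<zeta> x) y)"

end

theory Submission
  imports Defs
begin

text \<open>
  If \<open>\<xi>\<close> is bounded, so is \<open>\<xi>\<^sup>*\<close>, and \<open>(a\<xi>)\<^sup>* = \<xi>\<^sup>*a\<^sup>*\<close> shows that right multiplication
  \<open>a \<mapsto> a\<xi>\<close> is bounded on \<open>\<AA>\<^sub>0\<close> as well. Hence \<open>a \<mapsto> \<xi>a\<close> and \<open>a \<mapsto> a\<xi>\<close> extend continuously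
  to \<open>\<H>\<close>, and their values at \<open>\<eta>\<close> are \<open>\<xi> \<box> \<eta>\<close> and \<open>\<eta> \<box> \<xi>\<close>, as one checks on the dense
  subspace \<open>\<AA>\<^sub>0\<close>. Conversely, evaluating the defining identity of the weak product at the
  unit \<open>e\<close> gives \<open>\<langle>\<eta>, \<xi>\<^sup>*y\<rangle> = \<langle>\<xi> \<box> \<eta>, y\<rangle>\<close> and \<open>\<langle>\<xi>x, \<eta>\<rangle> = \<langle>x, (\<eta>\<^sup>* \<box> \<xi>)\<^sup>*\<rangle>\<close>. So if all these
  products exist, the vectors \<open>\<xi>\<^sup>*y/\<parallel>y\<parallel>\<close>, respectively \<open>\<xi>x/\<parallel>x\<parallel>\<close>, are weakly bounded, hence
  bounded by the uniform boundedness principle, i.e. \<open>\<xi>\<^sup>*\<close>, respectively \<open>\<xi>\<close>, is bounded.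
\<close>

section \<open>Uniform boundedness\<close>

lemma bounded_linear_bound_from_ball:
  fixes f :: "'a::real_normed_vector \<Rightarrow> 'b::real_normed_vector"
  assumes f: "bounded_linear f" and r: "r > 0"
    and bound: "\<And>x. x \<in> ball x0 r \<Longrightarrow> norm (f x) \<le> B"
  shows "norm (f y) \<le> (4 * B / r) * norm y"
proof (cases "y = 0")
  case True
  then show ?thesis using f by (simp add: linear_simps)
next
  case False
  define c where "c = 2 * norm y / r"
  have c: "c > 0" using False r by (simp add: c_def)
  define z where "z = y /\<^sub>R c"
  have "norm z < r" using r c by (simp add: z_def c_def)
  then have "norm (f (x0 + z)) \<le> B" "norm (f x0) \<le> B"
    using r by (auto intro!: bound simp: dist_norm)
  moreover have "f z = f (x0 + z) - f x0" using f by (simp add: linear_simps)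
  ultimately have "norm (f z) \<le> 2 * B" using norm_triangle_ineq4[of "f (x0 + z)" "f x0"] by simp
  moreover have "f y = c *\<^sub>R f z" using f c by (simp add: z_def linear_simps)
  ultimately have "norm (f y) \<le> c * (2 * B)" using c by simp
  then show ?thesis by (simp add: c_def field_simps)
qed

theorem uniform_boundedness:
  fixes f :: "'i \<Rightarrow> 'a::banach \<Rightarrow> 'b::real_normed_vector"
  assumes linear: "\<And>i. i \<in> J \<Longrightarrow> bounded_linear (f i)"
    and pointwise: "\<And>x. \<exists>B. \<forall>i\<in>J. norm (f i x) \<le> B"
  shows "\<exists>C. \<forall>i\<in>J. \<forall>x. norm (f i x) \<le> C * norm x"
proof -
  define F where "F n = {x. \<forall>i\<in>J. norm (f i x) \<le> real n}" for n :: nat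
  have closed: "closedin euclidean (F n)" for n
  proof -
    have "F n = (\<Inter>i\<in>J. {x. norm (f i x) \<le> real n})" by (auto simp: F_def)
    moreover have "closed {x. norm (f i x) \<le> real n}" if "i \<in> J" for i
      using linear[OF that] by (intro closed_Collect_le continuous_intros linear_continuous_on)
    ultimately show ?thesis by (simp add: closed_INT)
  qed
  have cover: "\<Union> (range F) = UNIV"
  proof -
    have "x \<in> \<Union> (range F)" for x
    proof -
      obtain B where B: "\<forall>i\<in>J. norm (f i x) \<le> B" using pointwise by blast
      then have "x \<in> F (nat \<lceil>B\<rceil>)"
        using order_trans[OF bspec[OF B] real_nat_ceiling_ge] unfolding F_def by blast
      then show ?thesis by blast
    qed
    then show ?thesis by auto
  qed
  have "\<exists>n. interior (F n) \<noteq> {}"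
  proof (rule ccontr)
    assume "\<nexists>n. interior (F n) \<noteq> {}"
    then have "euclidean interior_of \<Union> (range F) = {}"
      using closed by (intro Baire_category_alt completely_metrizable_space_euclidean[THEN disjI1]) auto
    then show False using cover by simp
  qed
  then obtain n x0 r where "r > 0" "ball x0 r \<subseteq> F n"
    by (auto simp: mem_interior)
  then have "norm (f i y) \<le> (4 * real n / r) * norm y" if "i \<in> J" for i y
    using that by (intro bounded_linear_bound_from_ball[OF linear]) (auto simp: F_def)
  then show ?thesis by blast
qed


section \<open>Complex inner product spaces\<close>

locale complex_hilbert =
  fixes S :: "('h::banach) hqa_data"
  assumes complex_hilbert: "complex_hilbert_space S"
begin

abbreviation inner_product :: "'h \<Rightarrow> 'h \<Rightarrow> complex"  (\<open>\<langle>_, _\<rangle>\<close>)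
  where "\<langle>x, y\<rangle> \<equiv> ip S x y"

lemma scC_of_real: "scC S (of_real r) x = r *\<^sub>R x"
  using complex_hilbert unfolding complex_hilbert_space_def by blast

lemma ip_add_left: "\<langle>x + y, z\<rangle> = \<langle>x, z\<rangle> + \<langle>y, z\<rangle>"
  using complex_hilbert unfolding complex_hilbert_space_def by blast

lemma ip_scC_left: "\<langle>scC S a x, y\<rangle> = a * \<langle>x, y\<rangle>"
  using complex_hilbert unfolding complex_hilbert_space_def by blast

lemma ip_commute: "\<langle>y, x\<rangle> = cnj \<langle>x, y\<rangle>"
  using complex_hilbert unfolding complex_hilbert_space_def by blast

lemma norm_eq_sqrt_ip: "norm x = sqrt (Re \<langle>x, x\<rangle>)"
  using complex_hilbert unfolding complex_hilbert_space_def by blast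

lemma ip_nonneg: "0 \<le> Re \<langle>x, x\<rangle>"
  using complex_hilbert unfolding complex_hilbert_space_def by blast

lemma ip_add_right: "\<langle>x, y + z\<rangle> = \<langle>x, y\<rangle> + \<langle>x, z\<rangle>"
  by (metis complex_cnj_add ip_add_left ip_commute)

lemma ip_scC_right: "\<langle>x, scC S a y\<rangle> = cnj a * \<langle>x, y\<rangle>"
  by (metis complex_cnj_mult ip_scC_left ip_commute)

lemma ip_zero_right [simp]: "\<langle>x, 0\<rangle> = 0"
  using ip_add_right[of x 0 0] by simp

lemma ip_self: "\<langle>x, x\<rangle> = of_real ((norm x)\<^sup>2)"
proof -
  have "Im \<langle>x, x\<rangle> = 0" using arg_cong[OF ip_commute[of x x], of Im] by simp
  moreover have "Re \<langle>x, x\<rangle> = (norm x)\<^sup>2" using norm_eq_sqrt_ip[of x] ip_nonneg[of x] by simp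
  ultimately show ?thesis by (simp add: complex_eq_iff)
qed

lemma norm_ip_self: "norm \<langle>x, x\<rangle> = (norm x)\<^sup>2"
  by (simp add: ip_self norm_power)

theorem Cauchy_Schwarz: "norm \<langle>x, y\<rangle> \<le> norm x * norm y"
proof (cases "y = 0")
  case True
  then show ?thesis by simp
next
  case False
  define n where "n = (norm y)\<^sup>2"
  define c where "c = \<langle>x, y\<rangle>"
  define t where "t = c / of_real n"
  have n: "n > 0" using False by (simp add: n_def)
  have cnj_c: "\<langle>y, x\<rangle> = cnj c" unfolding c_def by (rule ip_commute)
  have norm_c: "c * cnj c = of_real ((norm c)\<^sup>2)" by (rule complex_norm_square[symmetric])
  \<comment> \<open>\<open>x - t y\<close> is orthogonal to \<open>y\<close>; its squared norm is \<open>\<parallel>x\<parallel>\<^sup>2 - \<bar>c\<bar>\<^sup>2 / n\<close>\<close>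
  have "\<langle>x + scC S (- t) y, x + scC S (- t) y\<rangle>
      = \<langle>x, x\<rangle> - cnj t * c - t * cnj c + t * cnj t * \<langle>y, y\<rangle>"
    by (simp add: ip_add_left ip_add_right ip_scC_left ip_scC_right cnj_c flip: c_def)
       (simp add: algebra_simps)
  also have "\<dots> = of_real ((norm x)\<^sup>2 - (norm c)\<^sup>2 / n)"
    using n by (simp add: t_def ip_self field_simps norm_c flip: n_def)
  finally have "0 \<le> (norm x)\<^sup>2 - (norm c)\<^sup>2 / n"
    using ip_nonneg[of "x + scC S (- t) y"] by simp
  then have "(norm c)\<^sup>2 \<le> (norm x * norm y)\<^sup>2"
    using n by (simp add: n_def field_simps power_mult_distrib)
  then show ?thesis unfolding c_def by (rule power2_le_imp_le) simp
qed

lemma bounded_bilinear_ip: "bounded_bilinear (\<lambda>x y. \<langle>x, y\<rangle>)"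
proof
  show "\<langle>r *\<^sub>R x, y\<rangle> = r *\<^sub>R \<langle>x, y\<rangle>" "\<langle>x, r *\<^sub>R y\<rangle> = r *\<^sub>R \<langle>x, y\<rangle>" for r x y
    using ip_scC_left[of "of_real r"] ip_scC_right[of _ "of_real r"]
    by (simp_all add: scC_of_real scaleR_conv_of_real)
  show "\<exists>K. \<forall>x y. norm \<langle>x, y\<rangle> \<le> norm x * norm y * K"
    using Cauchy_Schwarz by (intro exI[of _ 1]) simp
qed (simp_all add: ip_add_left ip_add_right)

lemmas continuous_on_ip [continuous_intros] =
  bounded_bilinear.continuous_on[OF bounded_bilinear_ip]

lemma norm_le_if_ip_le_on_dense:
  assumes "closure D = UNIV" and "K \<ge> 0"
    and bound: "\<And>w. w \<in> D \<Longrightarrow> norm \<langle>x, w\<rangle> \<le> K * norm w"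
  shows "norm x \<le> K"
proof -
  have "continuous_on UNIV (\<lambda>w. norm \<langle>x, w\<rangle> - K * norm w)"
    by (intro continuous_intros)
  then have "norm \<langle>x, x\<rangle> - K * norm x \<le> 0"
    using continuous_le_on_closure[of D "\<lambda>w. norm \<langle>x, w\<rangle> - K * norm w" x 0] assms by auto
  then have "norm x * norm x \<le> K * norm x" by (simp add: norm_ip_self power2_eq_square)
  then show ?thesis using \<open>K \<ge> 0\<close> by (cases "x = 0") auto
qed

lemma operator_bound_if_weakly_bounded:
  assumes weak: "\<And>\<eta>. \<exists>K. \<forall>y\<in>D. norm \<langle>T y, \<eta>\<rangle> \<le> K * norm y"
  shows "\<exists>C. \<forall>y\<in>D. norm (T y) \<le> C * norm y"
proof -
  define f where "f y \<eta> = \<langle>\<eta>, T y /\<^sub>R norm y\<rangle>" for y \<eta>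
  have "\<exists>C. \<forall>y\<in>D - {0}. \<forall>\<eta>. norm (f y \<eta>) \<le> C * norm \<eta>"
  proof (rule uniform_boundedness)
    show "bounded_linear (f y)" for y
      unfolding f_def by (rule bounded_bilinear.bounded_linear_left[OF bounded_bilinear_ip])
    fix \<eta>
    obtain K where K: "\<forall>y\<in>D. norm \<langle>T y, \<eta>\<rangle> \<le> K * norm y" using weak by blast
    have "norm (f y \<eta>) \<le> K" if y: "y \<in> D - {0}" for y
    proof -
      have "norm (f y \<eta>) = norm \<langle>T y, \<eta>\<rangle> / norm y"
        by (simp add: f_def bounded_bilinear.scaleR_right[OF bounded_bilinear_ip]
            ip_commute[of \<eta>] divide_inverse_commute)
      then show ?thesis using K y by (simp add: divide_le_eq)
    qed
    then show "\<exists>B. \<forall>y\<in>D - {0}. norm (f y \<eta>) \<le> B" by blast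
  qed
  then obtain C where C: "\<And>y \<eta>. y \<in> D - {0} \<Longrightarrow> norm (f y \<eta>) \<le> C * norm \<eta>" by blast
  have "norm (T y) \<le> max C 0 * norm y" if y: "y \<in> D" for y
  proof (cases "y = 0")
    case True
    obtain K where "norm \<langle>T y, T y\<rangle> \<le> K * norm y" using weak y by blast
    then show ?thesis using True by (simp add: ip_self)
  next
    case False
    have "norm (f y (T y)) = norm (T y) * norm (T y) / norm y"
      by (simp add: f_def bounded_bilinear.scaleR_right[OF bounded_bilinear_ip] norm_ip_self
          power2_eq_square divide_inverse_commute)
    then have "norm (T y) * norm (T y) \<le> C * norm y * norm (T y)"
      using C[of y "T y"] y False by (simp add: divide_le_eq mult_ac)
    then have "norm (T y) \<le> C * norm y \<or> T y = 0" by auto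
    then show ?thesis by (auto intro: order_trans[OF _ mult_right_mono])
  qed
  then show ?thesis by blast
qed

end


section \<open>Hilbert quasi *-algebras\<close>

locale hilbert_quasi_algebra =
  fixes S :: "('h::banach) hqa_data"
  assumes hqa: "hilbert_quasi_star_algebra S"
begin

sublocale complex_hilbert
  using hqa unfolding hilbert_quasi_star_algebra_def by unfold_locales blast

abbreviation A0 :: "'h set" where "A0 \<equiv> alg0 S"

abbreviation mul :: "'h \<Rightarrow> 'h \<Rightarrow> 'h"  (infixl \<open>\<cdot>\<close> 70) where "x \<cdot> y \<equiv> mult S x y"

abbreviation adj :: "'h \<Rightarrow> 'h"  (\<open>_\<^sup>\<dagger>\<close> [1000] 1000) where "x\<^sup>\<dagger> \<equiv> inv S x"

lemma alg0_add: "a \<in> A0 \<Longrightarrow> b \<in> A0 \<Longrightarrow> a + b \<in> A0"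
  using hqa unfolding hilbert_quasi_star_algebra_def by (elim conjE) metis

lemma alg0_scC: "a \<in> A0 \<Longrightarrow> scC S c a \<in> A0"
  using hqa unfolding hilbert_quasi_star_algebra_def by (elim conjE) metis

lemma alg0_mult: "a \<in> A0 \<Longrightarrow> b \<in> A0 \<Longrightarrow> a \<cdot> b \<in> A0"
  using hqa unfolding hilbert_quasi_star_algebra_def by (elim conjE) metis

lemma alg0_mult_assoc: "a \<in> A0 \<Longrightarrow> b \<in> A0 \<Longrightarrow> c \<in> A0 \<Longrightarrow> a \<cdot> b \<cdot> c = a \<cdot> (b \<cdot> c)"
  using hqa unfolding hilbert_quasi_star_algebra_def by (elim conjE) metis

lemma alg0_adj: "a \<in> A0 \<Longrightarrow> a\<^sup>\<dagger> \<in> A0"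
  using hqa unfolding hilbert_quasi_star_algebra_def by (elim conjE) metis

lemma adj_mult_alg0: "a \<in> A0 \<Longrightarrow> b \<in> A0 \<Longrightarrow> (a \<cdot> b)\<^sup>\<dagger> = b\<^sup>\<dagger> \<cdot> a\<^sup>\<dagger>"
  using hqa unfolding hilbert_quasi_star_algebra_def by (elim conjE) metis

lemma closure_alg0: "closure A0 = UNIV"
  using hqa unfolding hilbert_quasi_star_algebra_def by (elim conjE) metis

lemma adj_add: "(\<xi> + \<eta>)\<^sup>\<dagger> = \<xi>\<^sup>\<dagger> + \<eta>\<^sup>\<dagger>"
  using hqa unfolding hilbert_quasi_star_algebra_def by (elim conjE) metis

lemma adj_scC: "(scC S c \<xi>)\<^sup>\<dagger> = scC S (cnj c) (\<xi>\<^sup>\<dagger>)"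
  using hqa unfolding hilbert_quasi_star_algebra_def by (elim conjE) metis

lemma adj_adj [simp]: "\<xi>\<^sup>\<dagger>\<^sup>\<dagger> = \<xi>"
  using hqa unfolding hilbert_quasi_star_algebra_def by (elim conjE) metis

lemma norm_adj [simp]: "norm (\<xi>\<^sup>\<dagger>) = norm \<xi>"
  using hqa unfolding hilbert_quasi_star_algebra_def by (elim conjE) metis

lemma mult_add_left: "a \<in> A0 \<Longrightarrow> (\<xi> + \<eta>) \<cdot> a = \<xi> \<cdot> a + \<eta> \<cdot> a"
  using hqa unfolding hilbert_quasi_star_algebra_def by (elim conjE) metis

lemma mult_add_right: "a \<in> A0 \<Longrightarrow> a \<cdot> (\<xi> + \<eta>) = a \<cdot> \<xi> + a \<cdot> \<eta>"
  using hqa unfolding hilbert_quasi_star_algebra_def by (elim conjE) metis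

lemma mult_scC_left: "a \<in> A0 \<Longrightarrow> scC S c \<xi> \<cdot> a = scC S c (\<xi> \<cdot> a)"
  using hqa unfolding hilbert_quasi_star_algebra_def by (elim conjE) metis

lemma mult_scC_right: "a \<in> A0 \<Longrightarrow> a \<cdot> scC S c \<xi> = scC S c (a \<cdot> \<xi>)"
  using hqa unfolding hilbert_quasi_star_algebra_def by (elim conjE) metis

lemma mult_alg0_bounded_left: "a \<in> A0 \<Longrightarrow> \<exists>C. \<forall>\<xi>. norm (\<xi> \<cdot> a) \<le> C * norm \<xi>"
  using hqa unfolding hilbert_quasi_star_algebra_def by (elim conjE) metis

lemma mult_alg0_bounded_right: "a \<in> A0 \<Longrightarrow> \<exists>C. \<forall>\<xi>. norm (a \<cdot> \<xi>) \<le> C * norm \<xi>"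
  using hqa unfolding hilbert_quasi_star_algebra_def by (elim conjE) metis

lemma ip_mult_alg0: "a \<in> A0 \<Longrightarrow> b \<in> A0 \<Longrightarrow> c \<in> A0 \<Longrightarrow> \<langle>a \<cdot> b, c\<rangle> = \<langle>b, a\<^sup>\<dagger> \<cdot> c\<rangle>"
  using hqa unfolding hilbert_quasi_star_algebra_def by (elim conjE) metis

lemma alg0_diff: "a \<in> A0 \<Longrightarrow> b \<in> A0 \<Longrightarrow> a - b \<in> A0"
  using alg0_add[of a "scC S (- 1) b"] alg0_scC[of b "- 1"] scC_of_real[of "- 1" b] by simp

lemma bounded_linear_adj: "bounded_linear adj"
proof (rule bounded_linear_intro[where K = 1])
  show "(r *\<^sub>R \<xi>)\<^sup>\<dagger> = r *\<^sub>R \<xi>\<^sup>\<dagger>" for r \<xi>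
    using adj_scC[of "of_real r" \<xi>] by (simp add: scC_of_real)
qed (simp_all add: adj_add)

lemma bounded_linear_mult_alg0_left:
  assumes "a \<in> A0" shows "bounded_linear (\<lambda>\<xi>. \<xi> \<cdot> a)"
proof -
  obtain C where C: "\<forall>\<xi>. norm (\<xi> \<cdot> a) \<le> C * norm \<xi>"
    using mult_alg0_bounded_left[OF assms] by blast
  show ?thesis
  proof (rule bounded_linear_intro[where K = C])
    show "r *\<^sub>R \<xi> \<cdot> a = r *\<^sub>R (\<xi> \<cdot> a)" for r \<xi>
      using mult_scC_left[OF assms, of "of_real r"] by (simp add: scC_of_real)
    show "norm (\<xi> \<cdot> a) \<le> norm \<xi> * C" for \<xi>
      using C by (simp add: mult.commute)
  qed (simp add: mult_add_left[OF assms])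
qed

lemma bounded_linear_mult_alg0_right:
  assumes "a \<in> A0" shows "bounded_linear (\<lambda>\<xi>. a \<cdot> \<xi>)"
proof -
  obtain C where C: "\<forall>\<xi>. norm (a \<cdot> \<xi>) \<le> C * norm \<xi>"
    using mult_alg0_bounded_right[OF assms] by blast
  show ?thesis
  proof (rule bounded_linear_intro[where K = C])
    show "a \<cdot> r *\<^sub>R \<xi> = r *\<^sub>R (a \<cdot> \<xi>)" for r \<xi>
      using mult_scC_right[OF assms, of "of_real r"] by (simp add: scC_of_real)
    show "norm (a \<cdot> \<xi>) \<le> norm \<xi> * C" for \<xi>
      using C by (simp add: mult.commute)
  qed (simp add: mult_add_right[OF assms])
qed

lemma continuous_on_adj [continuous_intros]: "continuous_on s f \<Longrightarrow> continuous_on s (\<lambda>t. (f t)\<^sup>\<dagger>)"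
  by (rule bounded_linear.continuous_on[OF bounded_linear_adj])

lemma continuous_on_mult_alg0_left [continuous_intros]:
  "a \<in> A0 \<Longrightarrow> continuous_on s f \<Longrightarrow> continuous_on s (\<lambda>t. f t \<cdot> a)"
  by (rule bounded_linear.continuous_on[OF bounded_linear_mult_alg0_left])

lemma continuous_on_mult_alg0_right [continuous_intros]:
  "a \<in> A0 \<Longrightarrow> continuous_on s f \<Longrightarrow> continuous_on s (\<lambda>t. a \<cdot> f t)"
  by (rule bounded_linear.continuous_on[OF bounded_linear_mult_alg0_right])

lemma eq_if_eq_on_alg0:
  fixes f g :: "'h \<Rightarrow> 'b::t2_space"
  assumes "continuous_on UNIV f" "continuous_on UNIV g" and "\<And>a. a \<in> A0 \<Longrightarrow> f a = g a"
  shows "f \<xi> = g \<xi>"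
proof -
  have "closed {\<xi>. f \<xi> = g \<xi>}"
    using closed_Collect_eq[OF assms(1,2)] by simp
  then have "closure A0 \<subseteq> {\<xi>. f \<xi> = g \<xi>}"
    using assms(3) by (intro closure_minimal) auto
  then show ?thesis using closure_alg0 by auto
qed

lemma ip_mult_alg0_left_adj: "a \<in> A0 \<Longrightarrow> y \<in> A0 \<Longrightarrow> \<langle>\<xi> \<cdot> a, y\<rangle> = \<langle>a, \<xi>\<^sup>\<dagger> \<cdot> y\<rangle>"
  by (rule eq_if_eq_on_alg0[where f = "\<lambda>\<xi>. \<langle>\<xi> \<cdot> a, y\<rangle>"])
     (auto intro!: continuous_intros ip_mult_alg0)

lemma ip_mult_alg0_right_adj: "a \<in> A0 \<Longrightarrow> y \<in> A0 \<Longrightarrow> \<langle>a \<cdot> \<xi>, y\<rangle> = \<langle>\<xi>, a\<^sup>\<dagger> \<cdot> y\<rangle>"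
  by (rule eq_if_eq_on_alg0[where f = "\<lambda>\<xi>. \<langle>a \<cdot> \<xi>, y\<rangle>"])
     (auto intro!: continuous_intros ip_mult_alg0)

lemma mult_assoc_alg0_left: "a \<in> A0 \<Longrightarrow> b \<in> A0 \<Longrightarrow> \<xi> \<cdot> a \<cdot> b = \<xi> \<cdot> (a \<cdot> b)"
  by (rule eq_if_eq_on_alg0[where f = "\<lambda>\<xi>. \<xi> \<cdot> a \<cdot> b"])
     (auto intro!: continuous_intros alg0_mult alg0_mult_assoc)

lemma mult_assoc_alg0_outer: "a \<in> A0 \<Longrightarrow> b \<in> A0 \<Longrightarrow> a \<cdot> \<xi> \<cdot> b = a \<cdot> (\<xi> \<cdot> b)"
  by (rule eq_if_eq_on_alg0[where f = "\<lambda>\<xi>. a \<cdot> \<xi> \<cdot> b"])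
     (auto intro!: continuous_intros alg0_mult_assoc)

lemma adj_mult_alg0_left: "a \<in> A0 \<Longrightarrow> (a \<cdot> \<xi>)\<^sup>\<dagger> = \<xi>\<^sup>\<dagger> \<cdot> a\<^sup>\<dagger>"
  by (rule eq_if_eq_on_alg0[where f = "\<lambda>\<xi>. (a \<cdot> \<xi>)\<^sup>\<dagger>"])
     (auto intro!: continuous_intros alg0_adj adj_mult_alg0)

lemma mult_diff_alg0_right: "a \<in> A0 \<Longrightarrow> b \<in> A0 \<Longrightarrow> \<xi> \<cdot> (a - b) = \<xi> \<cdot> a - \<xi> \<cdot> b"
  by (rule eq_if_eq_on_alg0[where f = "\<lambda>\<xi>. \<xi> \<cdot> (a - b)"])
     (auto intro!: continuous_intros alg0_diff
       linear_diff[OF bounded_linear.linear[OF bounded_linear_mult_alg0_right]])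

lemma mult_diff_alg0_left: "a \<in> A0 \<Longrightarrow> b \<in> A0 \<Longrightarrow> (a - b) \<cdot> \<xi> = a \<cdot> \<xi> - b \<cdot> \<xi>"
  by (rule eq_if_eq_on_alg0[where f = "\<lambda>\<xi>. (a - b) \<cdot> \<xi>"])
     (auto intro!: continuous_intros alg0_diff
       linear_diff[OF bounded_linear.linear[OF bounded_linear_mult_alg0_left]])

end


section \<open>Bounded elements and universal multipliers\<close>

context hilbert_quasi_algebra
begin

lemma continuous_extension_from_alg0:
  fixes f :: "'h \<Rightarrow> 'b::banach"
  assumes diff: "\<And>a b. a \<in> A0 \<Longrightarrow> b \<in> A0 \<Longrightarrow> f (a - b) = f a - f b"
    and bound: "\<And>a. a \<in> A0 \<Longrightarrow> norm (f a) \<le> C * norm a" and "C \<ge> 0"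
  obtains g where "continuous_on UNIV g" "\<And>a. a \<in> A0 \<Longrightarrow> g a = f a"
proof -
  have "C-lipschitz_on A0 f"
  proof (rule lipschitz_onI)
    show "dist (f a) (f b) \<le> C * dist a b" if "a \<in> A0" "b \<in> A0" for a b
      using bound[OF alg0_diff[OF that]] diff[OF that] by (simp add: dist_norm)
  qed fact
  then obtain g where "uniformly_continuous_on (closure A0) g" "\<And>a. a \<in> A0 \<Longrightarrow> f a = g a"
    by (metis lipschitz_on_uniformly_continuous uniformly_continuous_on_extension_on_closure)
  then show ?thesis
    using that closure_alg0 uniformly_continuous_imp_continuous by metis
qed

lemma bounded_elementE:
  assumes "\<xi> \<in> bounded_elements S"
  obtains C where "C \<ge> 0" "\<And>x. x \<in> A0 \<Longrightarrow> norm (\<xi> \<cdot> x) \<le> C * norm x"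
proof -
  obtain C where C: "\<forall>x\<in>A0. norm (\<xi> \<cdot> x) \<le> C * norm x"
    using assms unfolding bounded_elements_def by blast
  have "norm (\<xi> \<cdot> x) \<le> max C 0 * norm x" if "x \<in> A0" for x
    using C that by (auto intro: order_trans[OF _ mult_right_mono])
  then show thesis using that[of "max C 0"] by simp
qed

lemma adj_bounded_element:
  assumes "\<xi> \<in> bounded_elements S"
  shows "\<xi>\<^sup>\<dagger> \<in> bounded_elements S"
proof -
  obtain C where "C \<ge> 0" and C: "\<And>x. x \<in> A0 \<Longrightarrow> norm (\<xi> \<cdot> x) \<le> C * norm x"
    using bounded_elementE[OF assms] by blast
  have "norm (\<xi>\<^sup>\<dagger> \<cdot> y) \<le> C * norm y" if y: "y \<in> A0" for y
  proof (rule norm_le_if_ip_le_on_dense[OF closure_alg0])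
    show "0 \<le> C * norm y" using \<open>C \<ge> 0\<close> by simp
    fix w assume w: "w \<in> A0"
    have "norm \<langle>\<xi>\<^sup>\<dagger> \<cdot> y, w\<rangle> = norm \<langle>\<xi> \<cdot> w, y\<rangle>"
      by (metis complex_mod_cnj ip_commute ip_mult_alg0_left_adj w y)
    also have "\<dots> \<le> norm (\<xi> \<cdot> w) * norm y" by (rule Cauchy_Schwarz)
    also have "\<dots> \<le> C * norm w * norm y" using C[OF w] by (simp add: mult_right_mono)
    finally show "norm \<langle>\<xi>\<^sup>\<dagger> \<cdot> y, w\<rangle> \<le> C * norm y * norm w" by (simp add: ac_simps)
  qed
  then show ?thesis unfolding bounded_elements_def by blast
qed

lemma bounded_element_right_mult_bound:
  assumes "\<xi> \<in> bounded_elements S"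
  obtains C where "C \<ge> 0" "\<And>a. a \<in> A0 \<Longrightarrow> norm (a \<cdot> \<xi>) \<le> C * norm a"
proof -
  obtain C where "C \<ge> 0" and C: "\<And>x. x \<in> A0 \<Longrightarrow> norm (\<xi>\<^sup>\<dagger> \<cdot> x) \<le> C * norm x"
    using bounded_elementE[OF adj_bounded_element[OF assms]] by blast
  have "norm (a \<cdot> \<xi>) \<le> C * norm a" if "a \<in> A0" for a
    using C[OF alg0_adj[OF that]] norm_adj[of "a \<cdot> \<xi>"] by (simp add: adj_mult_alg0_left that)
  then show thesis using that \<open>C \<ge> 0\<close> by blast
qed

lemma left_multiplier_if_bounded_left:
  assumes "\<xi> \<in> bounded_elements S"
  shows "left_multiplier S \<xi> \<eta>"
proof -
  obtain C where "C \<ge> 0" "\<And>a. a \<in> A0 \<Longrightarrow> norm (\<xi> \<cdot> a) \<le> C * norm a"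
    using bounded_elementE[OF assms] by blast
  then obtain L where L: "continuous_on UNIV L" "\<And>a. a \<in> A0 \<Longrightarrow> L a = \<xi> \<cdot> a"
    using continuous_extension_from_alg0[of "\<lambda>a. \<xi> \<cdot> a" C] mult_diff_alg0_right by blast
  have "\<langle>\<eta> \<cdot> x, \<xi>\<^sup>\<dagger> \<cdot> y\<rangle> = \<langle>L \<eta> \<cdot> x, y\<rangle>" if x: "x \<in> A0" and y: "y \<in> A0" for x y
  proof (rule eq_if_eq_on_alg0[where f = "\<lambda>\<eta>. \<langle>\<eta> \<cdot> x, \<xi>\<^sup>\<dagger> \<cdot> y\<rangle>"])
    fix a assume a: "a \<in> A0"
    have "\<langle>a \<cdot> x, \<xi>\<^sup>\<dagger> \<cdot> y\<rangle> = \<langle>\<xi> \<cdot> (a \<cdot> x), y\<rangle>"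
      using a x y by (simp add: ip_mult_alg0_left_adj alg0_mult)
    also have "\<dots> = \<langle>L a \<cdot> x, y\<rangle>" using a x by (simp add: L(2) mult_assoc_alg0_left)
    finally show "\<langle>a \<cdot> x, \<xi>\<^sup>\<dagger> \<cdot> y\<rangle> = \<langle>L a \<cdot> x, y\<rangle>" .
  qed (use L(1) x y in \<open>auto intro!: continuous_intros\<close>)
  then show ?thesis unfolding left_multiplier_def by blast
qed

lemma left_multiplier_if_bounded_right:
  assumes "\<xi> \<in> bounded_elements S"
  shows "left_multiplier S \<eta> \<xi>"
proof -
  obtain C where "C \<ge> 0" "\<And>a. a \<in> A0 \<Longrightarrow> norm (a \<cdot> \<xi>) \<le> C * norm a"
    using bounded_element_right_mult_bound[OF assms] by blast
  then obtain R where R: "continuous_on UNIV R" "\<And>a. a \<in> A0 \<Longrightarrow> R a = a \<cdot> \<xi>"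
    using continuous_extension_from_alg0[of "\<lambda>a. a \<cdot> \<xi>" C] mult_diff_alg0_left by blast
  have "\<langle>\<xi> \<cdot> x, \<eta>\<^sup>\<dagger> \<cdot> y\<rangle> = \<langle>R \<eta> \<cdot> x, y\<rangle>" if x: "x \<in> A0" and y: "y \<in> A0" for x y
  proof (rule eq_if_eq_on_alg0[where f = "\<lambda>\<eta>. \<langle>\<xi> \<cdot> x, \<eta>\<^sup>\<dagger> \<cdot> y\<rangle>"])
    fix a assume a: "a \<in> A0"
    have "\<langle>\<xi> \<cdot> x, a\<^sup>\<dagger> \<cdot> y\<rangle> = \<langle>a \<cdot> (\<xi> \<cdot> x), y\<rangle>"
      using a y by (simp add: ip_mult_alg0_right_adj)
    also have "\<dots> = \<langle>R a \<cdot> x, y\<rangle>" using a x by (simp add: R(2) mult_assoc_alg0_outer)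
    finally show "\<langle>\<xi> \<cdot> x, a\<^sup>\<dagger> \<cdot> y\<rangle> = \<langle>R a \<cdot> x, y\<rangle>" .
  qed (use R(1) x y in \<open>auto intro!: continuous_intros\<close>)
  then show ?thesis unfolding left_multiplier_def by blast
qed

end

locale unital_hilbert_quasi_algebra = hilbert_quasi_algebra S for S :: "('h::banach) hqa_data" +
  fixes e :: 'h
  assumes unit: "hqa_unit S e"
begin

lemma unit_in_alg0: "e \<in> A0"
  using unit unfolding hqa_unit_def by blast

lemma mult_unit_right [simp]: "\<xi> \<cdot> e = \<xi>"
  using unit unfolding hqa_unit_def by blast

lemma bounded_if_left_multiplier_of_all:
  assumes "\<And>\<eta>. left_multiplier S \<xi> \<eta>"
  shows "\<xi> \<in> bounded_elements S"
proof -
  have "\<exists>K. \<forall>y\<in>A0. norm \<langle>\<xi>\<^sup>\<dagger> \<cdot> y, \<eta>\<rangle> \<le> K * norm y" for \<eta>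
  proof -
    obtain \<zeta> where \<zeta>: "\<forall>x\<in>A0. \<forall>y\<in>A0. \<langle>\<eta> \<cdot> x, \<xi>\<^sup>\<dagger> \<cdot> y\<rangle> = \<langle>\<zeta> \<cdot> x, y\<rangle>"
      using assms unfolding left_multiplier_def by blast
    \<comment> \<open>with \<open>x = e\<close>, the defining identity of \<open>\<xi> \<box> \<eta>\<close> says \<open>\<langle>\<eta>, \<xi>\<^sup>\<dagger> y\<rangle> = \<langle>\<xi> \<box> \<eta>, y\<rangle>\<close>\<close>
    have "norm \<langle>\<xi>\<^sup>\<dagger> \<cdot> y, \<eta>\<rangle> \<le> norm \<zeta> * norm y" if "y \<in> A0" for y
      using \<zeta> unit_in_alg0 that Cauchy_Schwarz[of \<zeta> y]
      by (metis complex_mod_cnj ip_commute mult_unit_right)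
    then show ?thesis by blast
  qed
  then obtain C where "\<forall>y\<in>A0. norm (\<xi>\<^sup>\<dagger> \<cdot> y) \<le> C * norm y"
    using operator_bound_if_weakly_bounded by blast
  then have "\<xi>\<^sup>\<dagger> \<in> bounded_elements S" unfolding bounded_elements_def by blast
  then show ?thesis using adj_bounded_element by fastforce
qed

lemma bounded_if_all_left_multipliers:
  assumes "\<And>\<eta>. left_multiplier S \<eta> \<xi>"
  shows "\<xi> \<in> bounded_elements S"
proof -
  have "\<exists>K. \<forall>x\<in>A0. norm \<langle>\<xi> \<cdot> x, \<eta>\<rangle> \<le> K * norm x" for \<eta>
  proof -
    obtain \<zeta> where \<zeta>: "\<forall>x\<in>A0. \<forall>y\<in>A0. \<langle>\<xi> \<cdot> x, \<eta>\<^sup>\<dagger>\<^sup>\<dagger> \<cdot> y\<rangle> = \<langle>\<zeta> \<cdot> x, y\<rangle>"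
      using assms[of "\<eta>\<^sup>\<dagger>"] unfolding left_multiplier_def by blast
    have "\<langle>\<xi> \<cdot> x, \<eta>\<rangle> = \<langle>x, \<zeta>\<^sup>\<dagger>\<rangle>" if "x \<in> A0" for x
    proof -
      have "\<langle>\<xi> \<cdot> x, \<eta>\<rangle> = \<langle>\<xi> \<cdot> x, \<eta>\<^sup>\<dagger>\<^sup>\<dagger> \<cdot> e\<rangle>" by simp
      also have "\<dots> = \<langle>\<zeta> \<cdot> x, e\<rangle>" using \<zeta> unit_in_alg0 that by blast
      also have "\<dots> = \<langle>x, \<zeta>\<^sup>\<dagger>\<rangle>" using ip_mult_alg0_left_adj[of x e \<zeta>] unit_in_alg0 that by simp
      finally show ?thesis .
    qed
    then have "norm \<langle>\<xi> \<cdot> x, \<eta>\<rangle> \<le> norm \<zeta> * norm x" if "x \<in> A0" for x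
      using that Cauchy_Schwarz[of x "\<zeta>\<^sup>\<dagger>"] by (simp add: mult.commute)
    then show ?thesis by blast
  qed
  then show ?thesis
    unfolding bounded_elements_def using operator_bound_if_weakly_bounded by blast
qed

end

theorem mainTheorem10:
  fixes S :: "('h::banach) hqa_data" and e :: 'h
  assumes "hilbert_quasi_star_algebra S"
    and "hqa_unit S e"
  shows "bounded_elements S = {\<xi>. \<forall>\<eta>. left_multiplier S \<eta> \<xi>} \<and>
         bounded_elements S = {\<xi>. \<forall>\<eta>. left_multiplier S \<xi> \<eta>}"
proof -
  interpret unital_hilbert_quasi_algebra S e
    using assms by unfold_locales
  show ?thesis
    using left_multiplier_if_bounded_right left_multiplier_if_bounded_left
      bounded_if_all_left_multipliers bounded_if_left_multiplier_of_all
    by blast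
qed

end
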